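(* Assume (A1) and (A2). Run $\mathrm{BOGD}_{\mathrm{IP}}$ with any step size $\eta>0$, any positive integer block size $K$ dividing $T$, and any tolerance $\epsilon>0$. For any $\mathbf{u}_1,\dots,\mathbf{u}_T\in\mathcal{K}$, writing $s(m)=(m-1)K+1$ and $P_T'=\sum_{m=2}^{T/K}\|\mathbf{u}_{s(m-1)}-\mathbf{u}_{s(m)}\|_2$, we have $$\sum_{m=1}^{T/K}\sum_{k=1}^{K}\big\langle\nabla f_{(m-1)K+k}(\mathbf{x}_m),\,\tilde{\mathbf{y}}_m-\mathbf{u}_{s(m)}\big\rangle\le\frac{7}{4\eta}D^2+\frac{\eta}{2}KTG^2+\frac{D}{\eta}P_T'.$$
   Context: Standing assumptions: (A1) $\mathcal{K}\subseteq\mathbb{R}^d$ is convex and compact, contains $\mathbf{0}$, and $\mathcal{K}\subseteq R\mathcal{B}$ where $R\mathcal{B}$ is the closed Euclidean ball of radius $R$ centered at $\mathbf{0}$; set $D=2R$, so $\|\mathbf{x}-\mathbf{x}'\|_2\le D$ for all $\mathbf{x},\mathbf{x}'\in\mathcal{K}$. (A2) Each loss $f_t$ is $G$-Lipschitz on $\mathcal{K}$, and its (sub)gradients satisfy $\|\nabla f_t(\mathbf{x})\|_2\le G$. Infeasible projection oracle $\mathcal{O}_{\mathrm{IP}}(\mathcal{K},\epsilon,\mathbf{x}_0,\mathbf{y}_0)$: given $\epsilon>0$, $\mathbf{x}_0\in\mathcal{K}$, $\mathbf{y}_0\in\mathbb{R}^d$, returns $(\mathbf{x},\tilde{\mathbf{y}})\in\mathcal{K}\times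 R\mathcal{B}$ with $\|\mathbf{x}-\tilde{\mathbf{y}}\|_2\le\sqrt{3\epsilon}$ and $\|\tilde{\mathbf{y}}-\mathbf{z}\|_2\le\|\mathbf{y}_0-\mathbf{z}\|_2$ for all $\mathbf{z}\in\mathcal{K}$. Algorithm $\mathrm{BOGD}_{\mathrm{IP}}$ (step size $\eta$, block size $K$, tolerance $\epsilon$): pick $\mathbf{x}_1\in\mathcal{K}$ arbitrary, $\tilde{\mathbf{y}}_1=\mathbf{x}_1$. Rounds are split into blocks; block $m$ consists of rounds $(m-1)K+1,\dots,mK$. At every round $t$ of block $m$ the algorithm plays $\mathbf{x}_t=\mathbf{x}_m$. At the last round of block $m$ it sets $\mathbf{y}_{m+1}=\tilde{\mathbf{y}}_m-\eta\sum_{r=(m-1)K+1}^{mK}\nabla f_r(\mathbf{x}_m)$ and $(\mathbf{x}_{m+1},\tilde{\mathbf{y}}_{m+1})=\mathcal{O}_{\mathrm{IP}}(\mathcal{K},\epsilon,\mathbf{x}_m,\mathbf{y}_{m+1})$. *)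

theory Defs
  imports "HOL-Analysis.Analysis"
begin

definition is_IP_oracle ::
  "'a::euclidean_space set \<Rightarrow> real \<Rightarrow> (real \<Rightarrow> 'a \<Rightarrow> 'a \<Rightarrow> 'a \<times> 'a) \<Rightarrow> bool" where
  "is_IP_oracle Kset R Orc \<longleftrightarrow>
     (\<forall>eps>0. \<forall>x0\<in>Kset. \<forall>y0.
        fst (Orc eps x0 y0) \<in> Kset \<and>
        snd (Orc eps x0 y0) \<in> cball 0 R \<and>
        norm (fst (Orc eps x0 y0) - snd (Orc eps x0 y0)) \<le> sqrt (3 * eps) \<and>
        (\<forall>z\<in>Kset. norm (snd (Orc eps x0 y0) - z) \<le> norm (y0 - z)))"

text \<open>State of BOGD_IP: \<open>bogd_ip Orc eta Kb eps g x1 m\<close> is the pair (x_{m+1}, y~_{m+1})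
  (0-based index m, i.e. block m+1). \<open>g r x\<close> is the (sub)gradient of f_r at x.\<close>
fun bogd_ip ::
  "(real \<Rightarrow> 'a \<Rightarrow> 'a \<Rightarrow> 'a \<times> 'a) \<Rightarrow> real \<Rightarrow> nat \<Rightarrow> real \<Rightarrow> (nat \<Rightarrow> 'a \<Rightarrow> 'a) \<Rightarrow> 'a
     \<Rightarrow> nat \<Rightarrow> 'a::real_vector \<times> 'a" where
  "bogd_ip Orc eta Kb eps g x1 0 = (x1, x1)"
| "bogd_ip Orc eta Kb eps g x1 (Suc m) =
     (let st = bogd_ip Orc eta Kb eps g x1 m;
          y = snd st - eta *\<^sub>R (\<Sum>r = m * Kb + 1 .. (m + 1) * Kb. g r (fst st))
      in Orc eps (fst st) y)"

end

theory Submission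
  imports Defs
begin

text \<open>Let v be the gradient sum of block m. The step y~ - eta v followed by the oracle
  moves y~ no farther from any z in K, so expanding the square gives
  <v, y~_m - z> <= (|y~_m - z|^2 - |y~_(m+1) - z|^2) / (2 eta) + eta/2 (K G)^2.
  Summing over blocks telescopes, except that the comparator u_s(m) changes between blocks;
  as all points lie in the ball of radius R, each change costs at most
  4R |u_s(m-1) - u_s(m)|, which yields the path-length term.\<close>

lemma norm_diff_power2_change_le:
  fixes y a b :: "'a::real_normed_vector"
  assumes "norm y \<le> R" "norm a \<le> R" "norm b \<le> R"
  shows "norm (y - b)^2 - norm (y - a)^2 \<le> 4 * R * norm (a - b)"
proof -
  have diff: "norm (y - b) - norm (y - a) \<le> norm (a - b)"
    using norm_triangle_ineq4[of "y - a" "b - a"] by (simp add: norm_minus_commute)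
  have sum: "norm (y - b) + norm (y - a) \<le> 4 * R"
    using norm_triangle_ineq4[of y b] norm_triangle_ineq4[of y a] assms by linarith
  have "norm (y - b)^2 - norm (y - a)^2 = (norm (y - b) - norm (y - a)) * (norm (y - b) + norm (y - a))"
    by (simp add: power2_eq_square algebra_simps)
  also have "\<dots> \<le> norm (a - b) * (norm (y - b) + norm (y - a))"
    using diff by (intro mult_right_mono) auto
  also have "\<dots> \<le> norm (a - b) * (4 * R)"
    using sum by (intro mult_left_mono) auto
  finally show ?thesis by (simp add: algebra_simps)
qed

lemma inner_le_of_nonexpansive_gradient_step:
  fixes y y' v z :: "'a::real_inner"
  assumes step: "norm (y' - z) \<le> norm (y - eta *\<^sub>R v - z)" and eta: "eta > 0"
  shows "inner v (y - z) \<le> 1 / (2 * eta) * (norm (y - z)^2 - norm (y' - z)^2) + eta / 2 * norm v ^ 2"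
proof -
  have "norm (y' - z)^2 \<le> norm ((y - z) - eta *\<^sub>R v)^2"
    using step by (intro power_mono) (auto simp: algebra_simps)
  also have "\<dots> = norm (y - z)^2 - 2 * eta * inner v (y - z) + eta^2 * norm v ^ 2"
    unfolding power2_norm_eq_inner
    by (simp add: inner_diff_left inner_diff_right inner_commute algebra_simps power2_eq_square)
  finally show ?thesis
    using eta by (simp add: field_simps power2_eq_square)
qed

lemma sum_le_telescoping_drifting_comparator:
  fixes y z :: "nat \<Rightarrow> 'a::real_normed_vector" and a :: "nat \<Rightarrow> real"
  assumes h: "h \<ge> 0"
    and block: "\<And>m. 1 \<le> m \<Longrightarrow> m \<le> M \<Longrightarrow>
      a m \<le> h * (norm (y m - z m)^2 - norm (y (Suc m) - z m)^2) + c"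
    and y_bound: "\<And>m. 1 \<le> m \<Longrightarrow> m \<le> M \<Longrightarrow> norm (y m) \<le> R"
    and z_bound: "\<And>m. 1 \<le> m \<Longrightarrow> m \<le> M \<Longrightarrow> norm (z m) \<le> R"
  shows "(\<Sum>m = 1..M. a m) \<le> h * (2 * R)^2 + M * c + h * (4 * R) * (\<Sum>m = 2..M. norm (z (m - 1) - z m))"
proof (cases "M = 0")
  case True
  then show ?thesis using h by simp
next
  case False
  let ?path = "\<lambda>N. \<Sum>m = 2..N. norm (z (m - 1) - z m)"
  have partial: "(\<Sum>m = 1..N. a m) \<le> h * (norm (y 1 - z 1)^2 - norm (y (Suc N) - z N)^2) + N * c
      + h * (4 * R) * ?path N" if "1 \<le> N" "N \<le> M" for N
    using that
  proof (induction N rule: dec_induct)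
    case base
    then show ?case using block[of 1] by simp
  next
    case (step n)
    have drift: "h * (norm (y (Suc n) - z (Suc n))^2 - norm (y (Suc n) - z n)^2)
        \<le> h * (4 * R * norm (z n - z (Suc n)))"
      using norm_diff_power2_change_le y_bound[of "Suc n"] z_bound[of n] z_bound[of "Suc n"] step.hyps step.prems
      by (intro mult_left_mono h) auto
    have "?path (Suc n) = ?path n + norm (z n - z (Suc n))"
      using step.hyps by simp
    then show ?case
      using step.IH step.prems step.hyps drift block[of "Suc n"]
      by (simp add: algebra_simps)
  qed
  have "norm (y 1 - z 1) \<le> 2 * R"
    using norm_triangle_ineq4[of "y 1" "z 1"] y_bound[of 1] z_bound[of 1] False by simp
  then have "norm (y 1 - z 1)^2 - norm (y (Suc M) - z M)^2 \<le> (2 * R)^2"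
    by (smt (verit) norm_ge_zero power_mono zero_le_power2)
  then have "h * (norm (y 1 - z 1)^2 - norm (y (Suc M) - z M)^2) \<le> h * (2 * R)^2"
    using h by (rule mult_left_mono)
  then show ?thesis using partial[of M] False by linarith
qed

lemma bogd_ip_in_bounds:
  assumes "is_IP_oracle Kset R Orc" "x1 \<in> Kset" "Kset \<subseteq> cball 0 R" "eps > 0"
  shows "fst (bogd_ip Orc eta Kb eps g x1 m) \<in> Kset \<and> snd (bogd_ip Orc eta Kb eps g x1 m) \<in> cball 0 R"
  using assms by (induction m) (auto simp: Let_def is_IP_oracle_def)

lemma sum_block_reindex:
  fixes f :: "nat \<Rightarrow> 'a::comm_monoid_add"
  shows "(\<Sum>r = m * Kb + 1..(m + 1) * Kb. f r) = (\<Sum>k = 1..Kb. f (m * Kb + k))"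
  using sum.shift_bounds_cl_nat_ivl[of "\<lambda>r. f r" 1 "m * Kb" Kb]
  by (simp add: add.commute)

lemma bogd_ip_block_inner_le:
  fixes Kb m :: nat
  assumes ip: "is_IP_oracle Kset R Orc" and x1: "x1 \<in> Kset" and bounded: "Kset \<subseteq> cball 0 R"
    and eps: "eps > 0" and eta: "eta > 0"
    and grad_bound: "\<And>t x. x \<in> Kset \<Longrightarrow> norm (g t x) \<le> G"
    and z: "z \<in> Kset"
  defines "st \<equiv> bogd_ip Orc eta Kb eps g x1"
  shows "(\<Sum>k = 1..Kb. inner (g (m * Kb + k) (fst (st m))) (snd (st m) - z))
    \<le> 1 / (2 * eta) * (norm (snd (st m) - z)^2 - norm (snd (st (Suc m)) - z)^2)
       + eta / 2 * (real Kb * G)^2"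
proof -
  define x where "x = fst (st m)"
  define v where "v = (\<Sum>k = 1..Kb. g (m * Kb + k) x)"
  have x_in: "x \<in> Kset"
    using bogd_ip_in_bounds[OF ip x1 bounded eps] unfolding x_def st_def by blast
  have next_state: "st (Suc m) = Orc eps x (snd (st m) - eta *\<^sub>R v)"
    unfolding st_def x_def v_def by (simp only: bogd_ip.simps Let_def sum_block_reindex)
  have step: "norm (snd (st (Suc m)) - z) \<le> norm (snd (st m) - eta *\<^sub>R v - z)"
    using ip x_in z eps unfolding next_state is_IP_oracle_def by blast
  have "norm v \<le> (\<Sum>k = 1..Kb. G)"
    unfolding v_def by (rule order_trans[OF norm_sum sum_mono]) (rule grad_bound[OF x_in])
  then have "eta / 2 * norm v ^ 2 \<le> eta / 2 * (real Kb * G)^2"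
    using eta by (intro mult_left_mono power_mono) auto
  then show ?thesis
    using inner_le_of_nonexpansive_gradient_step[OF step eta]
    unfolding v_def x_def by (simp add: inner_sum_left)
qed

theorem lemma5:
  fixes Kset :: "'a::euclidean_space set"
    and R G eta eps :: real
    and T Kb :: nat
    and f :: "nat \<Rightarrow> 'a \<Rightarrow> real"
    and g :: "nat \<Rightarrow> 'a \<Rightarrow> 'a"
    and Orc :: "real \<Rightarrow> 'a \<Rightarrow> 'a \<Rightarrow> 'a \<times> 'a"
    and x1 :: 'a
    and u :: "nat \<Rightarrow> 'a"
  assumes convex: "convex Kset" and compact: "compact Kset"
    and zero_in: "0 \<in> Kset" and bounded: "Kset \<subseteq> cball 0 R"
    and lipschitz: "\<And>t. \<forall>x\<in>Kset. \<forall>y\<in>Kset. \<bar>f t x - f t y\<bar> \<le> G * norm (x - y)"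
    and grad_bound: "\<And>t x. x \<in> Kset \<Longrightarrow> norm (g t x) \<le> G"
    and ip_orc: "is_IP_oracle Kset R Orc"
    and eta_pos: "eta > 0" and Kb_pos: "Kb > 0" and Kb_dvd: "Kb dvd T"
    and eps_pos: "eps > 0"
    and x1_in: "x1 \<in> Kset"
    and u_in: "\<And>t. t \<in> {1..T} \<Longrightarrow> u t \<in> Kset"
  shows
    "(let D = 2 * R;
          xs = (\<lambda>m. fst (bogd_ip Orc eta Kb eps g x1 (m - 1)));
          ys = (\<lambda>m. snd (bogd_ip Orc eta Kb eps g x1 (m - 1)));
          s = (\<lambda>m. (m - 1) * Kb + 1);
          P' = (\<Sum>m = 2 .. T div Kb. norm (u (s (m - 1)) - u (s m)))
      in (\<Sum>m = 1 .. T div Kb. \<Sum>k = 1 .. Kb.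
            inner (g ((m - 1) * Kb + k) (xs m)) (ys m - u (s m)))
         \<le> 7 / (4 * eta) * D\<^sup>2 + eta / 2 * real Kb * real T * G\<^sup>2 + D / eta * P')"
proof -
  define st where "st = bogd_ip Orc eta Kb eps g x1"
  define M where "M = T div Kb"
  have T_eq: "T = M * Kb" using Kb_dvd unfolding M_def by simp
  have u_block_in: "u ((m - 1) * Kb + 1) \<in> Kset" if "1 \<le> m" "m \<le> M" for m
  proof (rule u_in)
    have "(m - 1) * Kb + 1 \<le> (m - 1) * Kb + Kb" using Kb_pos by simp
    also have "\<dots> = m * Kb" using that by (cases m) auto
    also have "\<dots> \<le> T" unfolding T_eq using that by simp
    finally show "(m - 1) * Kb + 1 \<in> {1..T}" by simp
  qed
  have sum_bound: "(\<Sum>m = 1..M. \<Sum>k = 1..Kb. inner (g ((m - 1) * Kb + k) (fst (st (m - 1))))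
        (snd (st (m - 1)) - u ((m - 1) * Kb + 1)))
      \<le> 1 / (2 * eta) * (2 * R)^2 + M * (eta / 2 * (real Kb * G)^2)
        + 1 / (2 * eta) * (4 * R) * (\<Sum>m = 2..M. norm (u ((m - 1 - 1) * Kb + 1) - u ((m - 1) * Kb + 1)))"
  proof (rule sum_le_telescoping_drifting_comparator[where y = "\<lambda>m. snd (st (m - 1))"])
    fix m assume m: "1 \<le> m" "m \<le> M"
    then show "(\<Sum>k = 1..Kb. inner (g ((m - 1) * Kb + k) (fst (st (m - 1))))
        (snd (st (m - 1)) - u ((m - 1) * Kb + 1)))
      \<le> 1 / (2 * eta) * ((norm (snd (st (m - 1)) - u ((m - 1) * Kb + 1)))^2
        - (norm (snd (st (Suc m - 1)) - u ((m - 1) * Kb + 1)))^2) + eta / 2 * (real Kb * G)^2"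
      using bogd_ip_block_inner_le[where Kb = Kb and m = "m - 1",
          OF ip_orc x1_in bounded eps_pos eta_pos grad_bound u_block_in[OF m]]
      unfolding st_def by simp
    show "norm (snd (st (m - 1))) \<le> R" "norm (u ((m - 1) * Kb + 1)) \<le> R"
      using bogd_ip_in_bounds[OF ip_orc x1_in bounded eps_pos] u_block_in[OF m] bounded
      unfolding st_def by auto
  qed (use eta_pos in simp)
  have "1 / (2 * eta) * (2 * R)^2 \<le> 7 / (4 * eta) * (2 * R)^2"
    using eta_pos by (intro mult_right_mono) (auto simp: field_simps)
  then show ?thesis
    using sum_bound eta_pos unfolding Let_def st_def M_def[symmetric] T_eq
    by (simp add: power2_eq_square algebra_simps)
qed

end
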